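(* For every probabilistic single-item auction there exists an optimal (expected-revenue-maximizing) mixed signaling scheme in which, for every signal $S$ with $|\mathrm{supp}(S)|\ge 2$, the highest and second-highest bids are equal, i.e. $\sum_j\psi_{w_1(S),j}\varphi(j,S)=\sum_j\psi_{w_2(S),j}\varphi(j,S)$.
   Context: A probabilistic single-item auction: $n\ge 2$ bidders, $m$ item types with probabilities $p_j$, nonnegative valuations $v_{i,j}$; $\psi_{i,j}=p_jv_{i,j}$. A mixed signaling scheme is a finite signal set $\mathcal{S}$ and $\varphi:[m]\times\mathcal{S}\to[0,1]$ with $\sum_S\varphi(j,S)=1$ for each $j$; $\mathrm{supp}(S)=\{j:\varphi(j,S)>0\}$. Its expected revenue is $\sum_S\mathrm{max2}_i\{\sum_j\psi_{i,j}\varphi(j,S)\}$ ($\mathrm{max2}$ = second-largest entry with multiplicity). $w_1(S)$ and $w_2(S)$ are the bidders with the largest and second-largest value of $\sum_j\psi_{i,j}\varphi(j,S)$ (ties broken by a fixed priority order). Bids after signal $S$ are these quantities divided by the common factor $\sum_jp_j\varphi(j,S)$. *)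

theory Defs
  imports Complex_Main
begin

text \<open>Bidders are 0..<n, item types are 0..<m, signals are natural numbers
  (any finite signal set can be relabelled into nat).\<close>

definition psi :: "(nat \<Rightarrow> real) \<Rightarrow> (nat \<Rightarrow> nat \<Rightarrow> real) \<Rightarrow> nat \<Rightarrow> nat \<Rightarrow> real" where
  "psi p v i j = p j * v i j"

definition is_scheme :: "nat \<Rightarrow> nat set \<Rightarrow> (nat \<Rightarrow> nat \<Rightarrow> real) \<Rightarrow> bool" where
  "is_scheme m Sig phi \<longleftrightarrow> finite Sig
     \<and> (\<forall>j<m. \<forall>s\<in>Sig. 0 \<le> phi j s \<and> phi j s \<le> 1)
     \<and> (\<forall>j<m. (\<Sum>s\<in>Sig. phi j s) = 1)"

definition supp :: "nat \<Rightarrow> (nat \<Rightarrow> nat \<Rightarrow> real) \<Rightarrow> nat \<Rightarrow> nat set" where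
  "supp m phi s = {j. j < m \<and> phi j s > 0}"

definition sigval :: "nat \<Rightarrow> (nat \<Rightarrow> nat \<Rightarrow> real) \<Rightarrow> (nat \<Rightarrow> nat \<Rightarrow> real) \<Rightarrow> nat \<Rightarrow> nat \<Rightarrow> real" where
  "sigval m ps phi s i = (\<Sum>j<m. ps i j * phi j s)"

definition max2 :: "nat \<Rightarrow> (nat \<Rightarrow> real) \<Rightarrow> real" where
  "max2 n f = rev (sort (map f [0..<n])) ! 1"

definition revenue :: "nat \<Rightarrow> nat \<Rightarrow> (nat \<Rightarrow> nat \<Rightarrow> real) \<Rightarrow> nat set \<Rightarrow> (nat \<Rightarrow> nat \<Rightarrow> real) \<Rightarrow> real" where
  "revenue n m ps Sig phi = (\<Sum>s\<in>Sig. max2 n (sigval m ps phi s))"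

definition w1 :: "nat \<Rightarrow> (nat \<Rightarrow> real) \<Rightarrow> nat" where
  "w1 n f = (LEAST i. i < n \<and> (\<forall>k<n. f k \<le> f i))"

definition w2 :: "nat \<Rightarrow> (nat \<Rightarrow> real) \<Rightarrow> nat" where
  "w2 n f = (LEAST i. i < n \<and> i \<noteq> w1 n f \<and> (\<forall>k<n. k \<noteq> w1 n f \<longrightarrow> f k \<le> f i))"

end

theory Submission
  imports Defs "HOL-Combinatorics.List_Permutation" "HOL-Analysis.Analysis"
begin

text \<open>Since \<open>max2\<close> is the largest value of \<open>min (f a) (f b)\<close> over pairs of distinct bidders,
  every scheme is dominated by a canonical one with one signal per ordered pair \<open>(a, b)\<close>, valued
  by \<open>min\<close> of the two bids, plus one pure signal per item type, valued by the second-highest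
  single-item bid. The canonical schemes form a compact set on which this bound on revenue is
  continuous, so it has a maximizer; among the maximizers choose one of largest total mass on
  pure signals. If some signal of this scheme had a strict winner \<open>a\<close> over the runner-up \<open>b\<close>, some
  item \<open>j\<close> in it is valued more by \<open>a\<close> than by \<open>b\<close>; diverting a little of \<open>j\<close> to its pure signal and
  the rest of the signal to the pair signal \<open>(a, b)\<close> does not lower the bound on revenue but
  strictly increases the pure mass.\<close>

lemma sort_values_perm:
  obtains \<sigma> where "bij_betw \<sigma> {..<n} {..<n}" "\<forall>i<n. sort (map f [0..<n]) ! i = f (\<sigma> i)"
proof -
  have "sort (map f [0..<n]) <~~> map f [0..<n]" by simp
  from permutation_Ex_bij[OF this] obtain \<sigma> where \<sigma>:
    "bij_betw \<sigma> {..<n} {..<n}" "\<forall>i<n. sort (map f [0..<n]) ! i = map f [0..<n] ! (\<sigma> i)"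
    by auto
  moreover have "\<forall>i<n. \<sigma> i < n" using \<sigma>(1) bij_betwE by blast
  ultimately show ?thesis using that by auto
qed

lemma max2_eq_sort_nth: "n \<ge> 2 \<Longrightarrow> max2 n f = sort (map f [0..<n]) ! (n - 2)"
  by (simp add: max2_def rev_nth numeral_2_eq_2)

lemma min_le_max2:
  assumes "n \<ge> 2" "a < n" "b < n" "a \<noteq> b"
  shows "min (f a) (f b) \<le> max2 n f"
proof -
  obtain \<sigma> where bij: "bij_betw \<sigma> {..<n} {..<n}"
    and sorted: "\<forall>i<n. sort (map f [0..<n]) ! i = f (\<sigma> i)"
    by (rule sort_values_perm)
  have onto: "\<exists>i<n. \<sigma> i = c" if "c < n" for c
    using bij that unfolding bij_betw_def by (metis imageE lessThan_iff)
  obtain i i' where i: "i < n" "\<sigma> i = a" and i': "i' < n" "\<sigma> i' = b"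
    using onto assms(2,3) by blast
  have below: "f (\<sigma> k) \<le> max2 n f" if "k \<le> n - 2" for k
  proof -
    have "sort (map f [0..<n]) ! k \<le> sort (map f [0..<n]) ! (n - 2)"
      by (rule sorted_nth_mono[OF sorted_sort]) (use that assms(1) in auto)
    then show ?thesis using sorted that assms(1) max2_eq_sort_nth[OF assms(1)] by simp
  qed
  have "i \<noteq> i'" using i i' assms(4) by auto
  then have "i \<le> n - 2 \<or> i' \<le> n - 2" using i i' by linarith
  then show ?thesis using below i(2) i'(2) by (metis min.coboundedI1 min.coboundedI2)
qed

lemma max2_eq_min:
  assumes "n \<ge> 2"
  obtains a b where "a < n" "b < n" "a \<noteq> b" "max2 n f = min (f a) (f b)"
proof -
  obtain \<sigma> where bij: "bij_betw \<sigma> {..<n} {..<n}"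
    and sorted: "\<forall>i<n. sort (map f [0..<n]) ! i = f (\<sigma> i)"
    by (rule sort_values_perm)
  have le: "sort (map f [0..<n]) ! (n - 2) \<le> sort (map f [0..<n]) ! (n - 1)"
    using sorted_nth_mono[OF sorted_sort, of "n - 2" "n - 1" "map f [0..<n]"] assms by simp
  have "\<sigma> (n - 2) \<noteq> \<sigma> (n - 1)"
    using inj_onD[OF bij_betw_imp_inj_on[OF bij], of "n - 2" "n - 1"] assms by auto
  moreover have "\<sigma> (n - 2) < n" "\<sigma> (n - 1) < n"
    using bij_betwE[OF bij] assms by auto
  moreover have "max2 n f = min (f (\<sigma> (n - 2))) (f (\<sigma> (n - 1)))"
    using le sorted assms by (simp add: max2_eq_sort_nth min_absorb1)
  ultimately show ?thesis using that by blast
qed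

lemma finite_has_maximizer:
  fixes f :: "'a \<Rightarrow> 'b::linorder"
  assumes "finite A" "A \<noteq> {}"
  shows "\<exists>i\<in>A. \<forall>k\<in>A. f k \<le> f i"
proof -
  have "Max (f ` A) \<in> f ` A" using assms by simp
  then obtain i where "i \<in> A" "f i = Max (f ` A)" by (metis imageE)
  moreover have "\<forall>k\<in>A. f k \<le> Max (f ` A)" using assms by simp
  ultimately show ?thesis by metis
qed

lemma w1_is_max:
  assumes "n \<ge> 1"
  shows "w1 n f < n \<and> (\<forall>k<n. f k \<le> f (w1 n f))"
proof -
  have "\<exists>i. i < n \<and> (\<forall>k<n. f k \<le> f i)"
    using finite_has_maximizer[of "{..<n}" f] assms by fastforce
  from LeastI_ex[OF this] show ?thesis unfolding w1_def by blast
qed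

lemma w2_is_max_of_rest:
  assumes "n \<ge> 2"
  shows "w2 n f < n \<and> w2 n f \<noteq> w1 n f \<and> (\<forall>k<n. k \<noteq> w1 n f \<longrightarrow> f k \<le> f (w2 n f))"
proof -
  have "(if w1 n f = 0 then 1 else 0) \<in> {..<n} - {w1 n f}" using assms by auto
  then have "\<exists>i. i < n \<and> i \<noteq> w1 n f \<and> (\<forall>k<n. k \<noteq> w1 n f \<longrightarrow> f k \<le> f i)"
    using finite_has_maximizer[of "{..<n} - {w1 n f}" f] by fastforce
  from LeastI_ex[OF this] show ?thesis unfolding w2_def by blast
qed

lemma max2_eq_w2:
  assumes "n \<ge> 2"
  shows "max2 n f = f (w2 n f)"
proof -
  have w1: "w1 n f < n" "\<forall>k<n. f k \<le> f (w1 n f)" using w1_is_max[of n f] assms by auto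
  have w2: "w2 n f < n" "w2 n f \<noteq> w1 n f" "\<forall>k<n. k \<noteq> w1 n f \<longrightarrow> f k \<le> f (w2 n f)"
    using w2_is_max_of_rest[OF assms] by auto
  have "min (f (w1 n f)) (f (w2 n f)) \<le> max2 n f"
    using min_le_max2[OF assms w1(1) w2(1)] w2(2) by simp
  then have upper: "f (w2 n f) \<le> max2 n f" using w1 w2(1) by simp
  obtain a b where ab: "a < n" "b < n" "a \<noteq> b" "max2 n f = min (f a) (f b)"
    using max2_eq_min[OF assms] by blast
  have "min (f a) (f b) \<le> f (w2 n f)"
  proof (cases "a = w1 n f")
    case True
    then show ?thesis using ab w2(3) by (simp add: min.coboundedI2)
  next
    case False
    then show ?thesis using ab w2(3) by (simp add: min.coboundedI1)
  qed
  with upper ab(4) show ?thesis by linarith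
qed

lemma continuous_on_entry: "continuous_on S (\<lambda>z::nat \<Rightarrow> nat \<Rightarrow> real. z k r)"
  using continuous_on_compose2[of UNIV "\<lambda>w::nat \<Rightarrow> real. w r" UNIV "\<lambda>z. z k"]
    continuous_on_subset by fastforce

locale auction =
  fixes n m :: nat and ps :: "nat \<Rightarrow> nat \<Rightarrow> real"
  assumes two_bidders: "n \<ge> 2"
    and ps_nonneg: "\<And>i j. i < n \<Longrightarrow> j < m \<Longrightarrow> ps i j \<ge> 0"
begin

text \<open>Canonical schemes use the signals \<open>r < n * n + m\<close>: the signal \<open>r < n * n\<close> stands for the pair
  of bidders \<open>(r div n, r mod n)\<close>, and the signal \<open>n * n + j\<close> may only carry item type \<open>j\<close>.
  A canonical scheme is stored as a total function \<open>z k r\<close>, vanishing off the allowed entries,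
  so that these schemes form a compact set.\<close>

definition nsig :: nat where
  "nsig = n * n + m"

definition may_send :: "nat \<Rightarrow> nat \<Rightarrow> bool" where
  "may_send k r \<longleftrightarrow> k < m \<and> r < nsig \<and> (n * n \<le> r \<longrightarrow> r = n * n + k)"

definition canonical :: "(nat \<Rightarrow> nat \<Rightarrow> real) set" where
  "canonical = {z. (\<forall>k r. 0 \<le> z k r) \<and> (\<forall>k r. \<not> may_send k r \<longrightarrow> z k r = 0)
                  \<and> (\<forall>k<m. (\<Sum>r<nsig. z k r) = 1)}"

definition bid :: "nat \<Rightarrow> (nat \<Rightarrow> real) \<Rightarrow> real" where
  "bid i u = (\<Sum>k<m. ps i k * u k)"

definition pure_value :: "nat \<Rightarrow> real" where
  "pure_value j = max2 n (\<lambda>i. ps i j)"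

definition signal_bound :: "nat \<Rightarrow> (nat \<Rightarrow> real) \<Rightarrow> real" where
  "signal_bound r u =
     (if r < n * n then (if r div n \<noteq> r mod n then min (bid (r div n) u) (bid (r mod n) u) else 0)
      else pure_value (r - n * n) * u (r - n * n))"

definition bound_revenue :: "(nat \<Rightarrow> nat \<Rightarrow> real) \<Rightarrow> real" where
  "bound_revenue z = (\<Sum>r<nsig. signal_bound r (\<lambda>k. z k r))"

definition pure_mass :: "(nat \<Rightarrow> nat \<Rightarrow> real) \<Rightarrow> real" where
  "pure_mass z = (\<Sum>j<m. z j (n * n + j))"

lemma sigval_eq_bid: "sigval m ps z r i = bid i (\<lambda>k. z k r)"
  by (simp add: sigval_def bid_def)

lemma bid_add: "bid i (\<lambda>k. u k + w k) = bid i u + bid i w"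
  by (simp add: bid_def sum.distrib distrib_left)

lemma bid_nonneg: "z \<in> canonical \<Longrightarrow> i < n \<Longrightarrow> 0 \<le> bid i (\<lambda>k. z k r)"
  unfolding bid_def canonical_def by (auto intro!: sum_nonneg mult_nonneg_nonneg ps_nonneg)

lemma signal_bound_superadditive:
  "signal_bound r u + signal_bound r w \<le> signal_bound r (\<lambda>k. u k + w k)"
  unfolding signal_bound_def bid_add by (simp add: min_def distrib_left)

lemma signal_bound_zero: "signal_bound r (\<lambda>k. 0) = 0"
  by (simp add: signal_bound_def bid_def)

lemma pair_index:
  assumes "a < n" "b < n"
  shows "(a * n + b) div n = a" "(a * n + b) mod n = b" "a * n + b < n * n"
proof -
  have "a * n + b < (a + 1) * n" using assms by simp
  also have "\<dots> \<le> n * n" using assms by (intro mult_le_mono1) simp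
  finally show "a * n + b < n * n" .
qed (use assms in simp_all)

lemma canonical_le_1: "z \<in> canonical \<Longrightarrow> k < m \<Longrightarrow> r < nsig \<Longrightarrow> z k r \<le> 1"
  unfolding canonical_def using member_le_sum[of r "{..<nsig}" "\<lambda>r. z k r"] by auto

lemma is_scheme_canonical:
  assumes "z \<in> canonical"
  shows "is_scheme m {..<nsig} z"
  using assms canonical_le_1[OF assms] unfolding is_scheme_def canonical_def by simp

lemma card_supp_pure_signal:
  assumes "z \<in> canonical" "\<not> r < n * n"
  shows "card (supp m z r) \<le> 1"
proof -
  have "j = r - n * n" if "j \<in> supp m z r" for j
  proof -
    have "z j r \<noteq> 0" using that unfolding supp_def by simp
    then have "may_send j r" using assms(1) unfolding canonical_def by blast
    then show ?thesis using assms(2) unfolding may_send_def by simp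
  qed
  then have "supp m z r \<subseteq> {r - n * n}" by blast
  then show ?thesis using card_mono[of "{r - n * n}"] by fastforce
qed

lemma signal_bound_le_max2:
  assumes z: "z \<in> canonical" and r: "r < nsig"
  shows "signal_bound r (\<lambda>k. z k r) \<le> max2 n (sigval m ps z r)"
proof (cases "r < n * n")
  case pair: True
  have sv: "sigval m ps z r = (\<lambda>i. bid i (\<lambda>k. z k r))" by (rule ext) (rule sigval_eq_bid)
  have "min (bid 0 (\<lambda>k. z k r)) (bid 1 (\<lambda>k. z k r)) \<le> max2 n (sigval m ps z r)"
    unfolding sv using min_le_max2[OF two_bidders, of 0 1] two_bidders by simp
  moreover have "0 \<le> min (bid 0 (\<lambda>k. z k r)) (bid 1 (\<lambda>k. z k r))"
    using bid_nonneg[OF z, of 0] bid_nonneg[OF z, of 1] two_bidders by simp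
  moreover have "r div n < n" "r mod n < n"
    using pair two_bidders by (simp_all add: less_mult_imp_div_less)
  ultimately show ?thesis
    using pair min_le_max2[OF two_bidders, of "r div n" "r mod n" "sigval m ps z r"]
    unfolding signal_bound_def sv by auto
next
  case False
  define j where "j = r - n * n"
  have j: "j < m" "r = n * n + j" using False r unfolding j_def nsig_def by auto
  have "z k r = 0" if "k \<noteq> j" for k using z j that unfolding canonical_def may_send_def by auto
  then have "sigval m ps z r i = (\<Sum>k<m. if k = j then ps i j * z j r else 0)" for i
    unfolding sigval_def by (intro sum.cong) auto
  then have sv: "sigval m ps z r = (\<lambda>i. ps i j * z j r)" using j(1) by auto
  obtain a b where ab: "a < n" "b < n" "a \<noteq> b" "max2 n (\<lambda>i. ps i j) = min (ps a j) (ps b j)"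
    using max2_eq_min[OF two_bidders] by blast
  have "0 \<le> z j r" using z unfolding canonical_def by auto
  then have "signal_bound r (\<lambda>k. z k r) = min (ps a j * z j r) (ps b j * z j r)"
    using False ab(4) by (simp add: signal_bound_def pure_value_def j_def min_mult_distrib_right)
  also have "\<dots> \<le> max2 n (sigval m ps z r)"
    unfolding sv using min_le_max2[OF two_bidders ab(1-3), of "\<lambda>i. ps i j * z j r"] by simp
  finally show ?thesis .
qed

lemma bound_revenue_le_revenue: "z \<in> canonical \<Longrightarrow> bound_revenue z \<le> revenue n m ps {..<nsig} z"
  unfolding bound_revenue_def revenue_def by (rule sum_mono) (simp add: signal_bound_le_max2)

lemma continuous_on_signal_bound: "continuous_on S (\<lambda>z. signal_bound r (\<lambda>k. z k r))"
  by (cases "r < n * n"; cases "r div n \<noteq> r mod n"; simp add: signal_bound_def bid_def;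
      intro continuous_on_min continuous_on_sum continuous_on_mult continuous_on_const
        continuous_on_entry)

lemma continuous_on_bound_revenue: "continuous_on S bound_revenue"
  unfolding bound_revenue_def by (intro continuous_on_sum continuous_on_signal_bound)

lemma continuous_on_pure_mass: "continuous_on S pure_mass"
  unfolding pure_mass_def by (intro continuous_on_sum continuous_on_entry)

lemma compact_canonical: "compact canonical"
proof -
  define cube where "cube = PiE UNIV (\<lambda>_::nat. PiE UNIV (\<lambda>_::nat. {0..1::real}))"
  have "compact (PiE UNIV (\<lambda>_::nat. {0..1::real}))"
    using compactin_PiE[of "\<lambda>_. euclidean" UNIV "\<lambda>_::nat. {0..1::real}"]
    by (simp add: euclidean_product_topology)
  then have "compact cube"
    using compactin_PiE[of "\<lambda>_. euclidean" UNIV "\<lambda>_::nat. PiE UNIV (\<lambda>_::nat. {0..1::real})"]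
    by (simp add: euclidean_product_topology cube_def)
  define C where "C = (\<Inter>k. \<Inter>r. {z::nat \<Rightarrow> nat \<Rightarrow> real. 0 \<le> z k r})
     \<inter> (\<Inter>k. \<Inter>r. {z. z k r * (if may_send k r then 0 else 1) = 0})
     \<inter> (\<Inter>k\<in>{..<m}. {z. (\<Sum>r<nsig. z k r) = 1})"
  have "closed C" unfolding C_def
    by (intro closed_Int closed_INT ballI closed_Collect_le closed_Collect_eq continuous_on_const
        continuous_on_mult continuous_on_entry continuous_on_sum)
  moreover have "canonical = cube \<inter> C"
  proof (intro set_eqI iffI)
    fix z assume z: "z \<in> canonical"
    have "z k r \<in> {0..1}" for k r
      using z canonical_le_1[OF z] unfolding canonical_def may_send_def
      by (cases "may_send k r") (auto simp: may_send_def)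
    then show "z \<in> cube \<inter> C" using z unfolding C_def cube_def canonical_def by auto
  next
    fix z assume "z \<in> cube \<inter> C"
    then show "z \<in> canonical" unfolding C_def canonical_def by (auto split: if_splits)
  qed
  ultimately show ?thesis using \<open>compact cube\<close> by (simp add: compact_Int_closed)
qed

lemma canonical_nonempty: "canonical \<noteq> {}"
proof -
  define z where "z k r = (if k < m \<and> r = n * n + k then 1 else (0::real))" for k r
  have "z \<in> canonical" unfolding canonical_def
  proof (intro CollectI conjI allI impI)
    fix k r show "0 \<le> z k r" by (simp add: z_def)
  next
    fix k r assume "\<not> may_send k r" then show "z k r = 0" by (auto simp: z_def may_send_def nsig_def)
  next
    fix k assume k: "k < m"
    then have "(\<Sum>r<nsig. z k r) = (\<Sum>r<nsig. if r = n * n + k then 1 else 0)" by (simp add: z_def)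
    also have "\<dots> = 1" using k by (simp add: nsig_def)
    finally show "(\<Sum>r<nsig. z k r) = 1" .
  qed
  then show ?thesis by auto
qed

definition pool :: "nat set \<Rightarrow> (nat \<Rightarrow> nat \<Rightarrow> real) \<Rightarrow> (nat \<Rightarrow> nat) \<Rightarrow> nat \<Rightarrow> nat \<Rightarrow> real" where
  "pool Sig phi \<pi> k r = (if k < m \<and> r < n * n then \<Sum>s\<in>{s\<in>Sig. \<pi> s = r}. phi k s else 0)"

lemma pool_canonical:
  assumes sch: "is_scheme m Sig phi" and \<pi>: "\<And>s. \<pi> s < n * n"
  shows "pool Sig phi \<pi> \<in> canonical"
  unfolding canonical_def
proof (intro CollectI conjI allI impI)
  fix k r show "0 \<le> pool Sig phi \<pi> k r"
    using sch unfolding pool_def is_scheme_def by (auto intro!: sum_nonneg)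
next
  fix k r assume "\<not> may_send k r"
  then show "pool Sig phi \<pi> k r = 0" unfolding pool_def may_send_def nsig_def by auto
next
  fix k assume k: "k < m"
  have "(\<Sum>r<nsig. pool Sig phi \<pi> k r) = (\<Sum>r<n * n. pool Sig phi \<pi> k r)"
    by (rule sum.mono_neutral_right) (auto simp: pool_def nsig_def)
  also have "\<dots> = (\<Sum>r<n * n. \<Sum>s\<in>{s\<in>Sig. \<pi> s = r}. phi k s)" using k by (simp add: pool_def)
  also have "\<dots> = (\<Sum>s\<in>Sig. phi k s)" using sch \<pi> unfolding is_scheme_def by (intro sum.group) auto
  finally show "(\<Sum>r<nsig. pool Sig phi \<pi> k r) = 1" using sch k unfolding is_scheme_def by simp
qed

lemma bid_pool:
  assumes "r < n * n"
  shows "bid i (\<lambda>k. pool Sig phi \<pi> k r) = (\<Sum>s\<in>{s\<in>Sig. \<pi> s = r}. sigval m ps phi s i)"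
proof -
  have "bid i (\<lambda>k. pool Sig phi \<pi> k r) = (\<Sum>k<m. \<Sum>s\<in>{s\<in>Sig. \<pi> s = r}. ps i k * phi k s)"
    unfolding bid_def pool_def using assms by (simp add: sum_distrib_left)
  also have "\<dots> = (\<Sum>s\<in>{s\<in>Sig. \<pi> s = r}. sigval m ps phi s i)"
    unfolding sigval_def by (rule sum.swap)
  finally show ?thesis .
qed

lemma pair_signal_choice:
  obtains \<pi> where "\<And>s. \<pi> s < n * n" "\<And>s. \<pi> s div n \<noteq> \<pi> s mod n"
    "\<And>s. max2 n (f s) = min (f s (\<pi> s div n)) (f s (\<pi> s mod n))"
proof -
  have "\<exists>r. r < n * n \<and> r div n \<noteq> r mod n \<and> max2 n (f s) = min (f s (r div n)) (f s (r mod n))"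
    for s
  proof -
    obtain a b where "a < n" "b < n" "a \<noteq> b" "max2 n (f s) = min (f s a) (f s b)"
      using max2_eq_min[OF two_bidders] by blast
    then show ?thesis using pair_index[of a b] by (intro exI[of _ "a * n + b"]) auto
  qed
  then show ?thesis using that by metis
qed

lemma sum_max2_le_signal_bound:
  assumes r: "r < n * n" "r div n \<noteq> r mod n"
    and le: "\<And>s. \<pi> s = r \<Longrightarrow>
      max2 n (sigval m ps phi s) \<le> min (sigval m ps phi s (r div n)) (sigval m ps phi s (r mod n))"
  shows "(\<Sum>s\<in>{s\<in>Sig. \<pi> s = r}. max2 n (sigval m ps phi s)) \<le> signal_bound r (\<lambda>k. pool Sig phi \<pi> k r)"
proof -
  have "(\<Sum>s\<in>{s\<in>Sig. \<pi> s = r}. max2 n (sigval m ps phi s))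
      \<le> (\<Sum>s\<in>{s\<in>Sig. \<pi> s = r}. sigval m ps phi s (r div n))"
    "(\<Sum>s\<in>{s\<in>Sig. \<pi> s = r}. max2 n (sigval m ps phi s))
      \<le> (\<Sum>s\<in>{s\<in>Sig. \<pi> s = r}. sigval m ps phi s (r mod n))"
    using le by (auto intro!: sum_mono)
  then show ?thesis using r by (simp add: signal_bound_def bid_pool)
qed

lemma revenue_le_bound_revenue:
  assumes sch: "is_scheme m Sig phi"
  shows "\<exists>z\<in>canonical. revenue n m ps Sig phi \<le> bound_revenue z"
proof -
  obtain \<pi> where \<pi>: "\<And>s. \<pi> s < n * n" "\<And>s. \<pi> s div n \<noteq> \<pi> s mod n"
    "\<And>s. max2 n (sigval m ps phi s)
        = min (sigval m ps phi s (\<pi> s div n)) (sigval m ps phi s (\<pi> s mod n))"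
    using pair_signal_choice[of "sigval m ps phi"] by blast
  have "revenue n m ps Sig phi = (\<Sum>r<n * n. \<Sum>s\<in>{s\<in>Sig. \<pi> s = r}. max2 n (sigval m ps phi s))"
    unfolding revenue_def using sch \<pi>(1) unfolding is_scheme_def by (intro sum.group[symmetric]) auto
  also have "\<dots> \<le> (\<Sum>r<n * n. signal_bound r (\<lambda>k. pool Sig phi \<pi> k r))"
  proof (rule sum_mono)
    fix r assume r: "r \<in> {..<n * n}"
    show "(\<Sum>s\<in>{s\<in>Sig. \<pi> s = r}. max2 n (sigval m ps phi s)) \<le> signal_bound r (\<lambda>k. pool Sig phi \<pi> k r)"
    proof (cases "r div n = r mod n")
      case True
      then have "{s\<in>Sig. \<pi> s = r} = {}" using \<pi>(2) by auto
      then show ?thesis using True r by (simp only: sum.empty) (simp add: signal_bound_def)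
    next
      case False
      then show ?thesis using r \<pi>(3) by (intro sum_max2_le_signal_bound) auto
    qed
  qed
  also have "\<dots> = bound_revenue (pool Sig phi \<pi>)" unfolding bound_revenue_def
    by (rule sum.mono_neutral_left) (auto simp: pool_def nsig_def signal_bound_def)
  finally have "revenue n m ps Sig phi \<le> bound_revenue (pool Sig phi \<pi>)" .
  moreover have "pool Sig phi \<pi> \<in> canonical" using sch \<pi>(1) by (rule pool_canonical)
  ultimately show ?thesis by blast
qed

lemma lex_maximizer:
  obtains z0 where "z0 \<in> canonical" "\<forall>w\<in>canonical. bound_revenue w \<le> bound_revenue z0"
    "\<forall>w\<in>canonical. bound_revenue w = bound_revenue z0 \<longrightarrow> pure_mass w \<le> pure_mass z0"
proof -
  obtain z1 where z1: "z1 \<in> canonical" "\<forall>w\<in>canonical. bound_revenue w \<le> bound_revenue z1"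
    using continuous_attains_sup[OF compact_canonical canonical_nonempty continuous_on_bound_revenue]
    by blast
  define M where "M = canonical \<inter> {z. bound_revenue z = bound_revenue z1}"
  have "closed {z. bound_revenue z = bound_revenue z1}"
    by (intro closed_Collect_eq continuous_on_bound_revenue continuous_on_const)
  then have "compact M" unfolding M_def using compact_canonical by (simp add: compact_Int_closed)
  moreover have "M \<noteq> {}" using z1 unfolding M_def by auto
  ultimately obtain z0 where "z0 \<in> M" "\<forall>w\<in>M. pure_mass w \<le> pure_mass z0"
    using continuous_attains_sup[OF _ _ continuous_on_pure_mass] by blast
  then show ?thesis using that z1 unfolding M_def by auto
qed

text \<open>\<open>divert z s t j \<delta>\<close> sends the content of signal \<open>s\<close> with pair signal \<open>t\<close> instead, except for
  mass \<open>\<delta>\<close> of item type \<open>j\<close>, which goes to the pure signal of \<open>j\<close>.\<close>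

definition divert ::
  "(nat \<Rightarrow> nat \<Rightarrow> real) \<Rightarrow> nat \<Rightarrow> nat \<Rightarrow> nat \<Rightarrow> real \<Rightarrow> nat \<Rightarrow> nat \<Rightarrow> real" where
  "divert z s t j \<delta> k r = z k r - (if r = s then z k s else 0)
     + (if r = t then z k s - (if k = j then \<delta> else 0) else 0)
     + (if r = n * n + j \<and> k = j then \<delta> else 0)"

lemma divert_canonical:
  assumes z: "z \<in> canonical" and s: "s < n * n" and t: "t < n * n" and j: "j < m"
    and \<delta>: "0 \<le> \<delta>" "\<delta> \<le> z j s"
  shows "divert z s t j \<delta> \<in> canonical"
  unfolding canonical_def
proof (intro CollectI conjI allI impI)
  have z_nonneg: "0 \<le> z k r" for k r using z unfolding canonical_def by auto
  fix k r show "0 \<le> divert z s t j \<delta> k r"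
    using z_nonneg[of k r] z_nonneg[of k s] \<delta> unfolding divert_def by auto
next
  fix k r assume not_sent: "\<not> may_send k r"
  have "z k r = 0" "r = t \<Longrightarrow> z k s = 0"
    using z not_sent s t unfolding canonical_def may_send_def nsig_def by auto
  then show "divert z s t j \<delta> k r = 0"
    using not_sent s t j unfolding divert_def may_send_def nsig_def by auto
next
  fix k assume k: "k < m"
  have "(\<Sum>r<nsig. divert z s t j \<delta> k r) = (\<Sum>r<nsig. z k r) - z k s
      + (z k s - (if k = j then \<delta> else 0)) + (if k = j then \<delta> else 0)"
    using s t j unfolding divert_def nsig_def by (simp add: sum.distrib sum_subtractf)
  then show "(\<Sum>r<nsig. divert z s t j \<delta> k r) = 1" using z k unfolding canonical_def by simp
qed

lemma pure_mass_divert: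
  assumes "s < n * n" "t < n * n" "j < m"
  shows "pure_mass (divert z s t j \<delta>) = pure_mass z + \<delta>"
proof -
  have "pure_mass (divert z s t j \<delta>) = (\<Sum>i<m. z i (n * n + i) + (if i = j then \<delta> else 0))"
    unfolding pure_mass_def divert_def using assms by (intro sum.cong) auto
  then show ?thesis using assms(3) by (simp add: sum.distrib pure_mass_def)
qed

lemma signal_bound_divert:
  assumes s: "s < n * n" and t: "t < n * n"
  shows "(if r = n * n + j then \<delta> * pure_value j else 0)
      + (if r = t then signal_bound t (\<lambda>k. z k s - (if k = j then \<delta> else 0)) else 0)
      - (if r = s then signal_bound s (\<lambda>k. z k s) else 0)
    \<le> signal_bound r (\<lambda>k. divert z s t j \<delta> k r) - signal_bound r (\<lambda>k. z k r)"
proof -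
  consider "r = n * n + j" | "r = s" "r = t" | "r = s" "r \<noteq> t" | "r \<noteq> s" "r = t"
    | "r \<noteq> n * n + j" "r \<noteq> s" "r \<noteq> t" by blast
  then show ?thesis
  proof cases
    case 1
    then have "(\<lambda>k. divert z s t j \<delta> k r) = (\<lambda>k. z k r + (if k = j then \<delta> else 0))"
      using s t unfolding divert_def by auto
    then show ?thesis using 1 s t by (simp add: signal_bound_def algebra_simps)
  next
    case 4
    then have "(\<lambda>k. divert z s t j \<delta> k r) = (\<lambda>k. z k r + (z k s - (if k = j then \<delta> else 0)))"
      using t unfolding divert_def by auto
    then show ?thesis
      using 4 t signal_bound_superadditive[of r "\<lambda>k. z k r" "\<lambda>k. z k s - (if k = j then \<delta> else 0)"]
      by simp
  qed (use s t in \<open>auto simp: divert_def signal_bound_zero\<close>)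
qed

lemma bid_minus_item:
  assumes "j < m"
  shows "bid i (\<lambda>k. u k - (if k = j then \<delta> else 0)) = bid i u - ps i j * \<delta>"
proof -
  have "bid i (\<lambda>k. u k - (if k = j then \<delta> else 0))
      = bid i u - (\<Sum>k<m. if k = j then ps i j * \<delta> else 0)"
    unfolding bid_def sum_subtractf[symmetric] by (intro sum.cong) (auto simp: algebra_simps)
  then show ?thesis using assms by simp
qed

lemma bound_revenue_divert:
  fixes z :: "nat \<Rightarrow> nat \<Rightarrow> real" and s :: nat
  defines "x \<equiv> \<lambda>k. z k s"
  assumes s: "s < n * n" and ab: "a < n" "b < n" "a \<noteq> b" and j: "j < m"
    and below: "signal_bound s x \<le> bid b x"
    and order: "bid b x - ps b j * \<delta> \<le> bid a x - ps a j * \<delta>"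
    and pure: "\<delta> * ps b j \<le> \<delta> * pure_value j"
  shows "bound_revenue z \<le> bound_revenue (divert z s (a * n + b) j \<delta>)"
proof -
  define t where "t = a * n + b"
  have t: "t < n * n" "t div n = a" "t mod n = b" using pair_index[OF ab(1,2)] t_def by auto
  have "signal_bound t (\<lambda>k. x k - (if k = j then \<delta> else 0)) = bid b x - ps b j * \<delta>"
    using t ab(3) order by (simp add: signal_bound_def bid_minus_item[OF j] min_def)
  then have "0 \<le> \<delta> * pure_value j + signal_bound t (\<lambda>k. x k - (if k = j then \<delta> else 0))
      - signal_bound s x"
    using below pure by (simp add: algebra_simps)
  also have "\<dots> = (\<Sum>r<nsig. (if r = n * n + j then \<delta> * pure_value j else 0)
      + (if r = t then signal_bound t (\<lambda>k. x k - (if k = j then \<delta> else 0)) else 0)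
      - (if r = s then signal_bound s x else 0))"
    using s t(1) j by (simp add: sum.distrib sum_subtractf nsig_def)
  also have "\<dots> \<le> (\<Sum>r<nsig. signal_bound r (\<lambda>k. divert z s t j \<delta> k r) - signal_bound r (\<lambda>k. z k r))"
    unfolding x_def by (intro sum_mono signal_bound_divert[OF s t(1)])
  also have "\<dots> = bound_revenue (divert z s t j \<delta>) - bound_revenue z"
    unfolding bound_revenue_def by (simp add: sum_subtractf)
  finally show ?thesis unfolding t_def by simp
qed

lemma bid_less_imp_favored_item:
  assumes "bid b x < bid a x" "\<And>k. 0 \<le> x k"
  shows "\<exists>j<m. ps b j < ps a j \<and> 0 < x j"
proof (rule ccontr)
  assume none: "\<not> (\<exists>j<m. ps b j < ps a j \<and> 0 < x j)"
  have "(ps a k - ps b k) * x k \<le> 0" if "k < m" for k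
  proof -
    have "ps a k \<le> ps b k \<or> x k = 0" using that assms(2)[of k] none by force
    then show ?thesis using assms(2)[of k] by (auto intro: mult_nonpos_nonneg)
  qed
  then have "(\<Sum>k<m. (ps a k - ps b k) * x k) \<le> 0" by (intro sum_nonpos) simp
  moreover have "(\<Sum>k<m. (ps a k - ps b k) * x k) = bid a x - bid b x"
    unfolding bid_def by (simp add: sum_subtractf left_diff_distrib)
  ultimately show False using assms(1) by linarith
qed

lemma strict_winner_improvable:
  fixes z0 :: "nat \<Rightarrow> nat \<Rightarrow> real" and s :: nat
  defines "f \<equiv> sigval m ps z0 s"
  assumes z0: "z0 \<in> canonical" and s: "s < n * n" and gap: "f (w2 n f) < f (w1 n f)"
  shows "\<exists>z\<in>canonical. bound_revenue z0 \<le> bound_revenue z \<and> pure_mass z0 < pure_mass z"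
proof -
  define a b x where "a = w1 n f" and "b = w2 n f" and "x = (\<lambda>k. z0 k s)"
  have a: "a < n" using w1_is_max[of n f] two_bidders a_def by auto
  have b: "b < n" "a \<noteq> b" using w2_is_max_of_rest[OF two_bidders, of f] a_def b_def by auto
  have f: "f i = bid i x" for i unfolding f_def x_def by (rule sigval_eq_bid)
  obtain j where j: "j < m" and pj: "ps b j < ps a j" and xj: "0 < x j"
    using bid_less_imp_favored_item[of b x a] gap z0 unfolding a_def b_def f x_def canonical_def
    by blast
  define \<delta> where "\<delta> = min (x j) ((f a - f b) / (ps a j - ps b j))"
  have "\<delta> \<le> (f a - f b) / (ps a j - ps b j)" unfolding \<delta>_def by simp
  then have \<delta>_gap: "\<delta> * (ps a j - ps b j) \<le> f a - f b" using pj by (simp add: pos_le_divide_eq)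
  have \<delta>: "0 < \<delta>" "\<delta> \<le> x j" using xj pj gap by (simp_all add: \<delta>_def a_def b_def)
  define z where "z = divert z0 s (a * n + b) j \<delta>"
  have "z \<in> canonical"
    unfolding z_def using z0 s pair_index[OF a b(1)] j \<delta> by (intro divert_canonical) (auto simp: x_def)
  moreover have "bound_revenue z0 \<le> bound_revenue z"
    unfolding z_def
  proof (rule bound_revenue_divert[OF s a b j])
    have "signal_bound s x \<le> max2 n f"
      using signal_bound_le_max2[OF z0, of s] s unfolding x_def f_def nsig_def by simp
    then show "signal_bound s (\<lambda>k. z0 k s) \<le> bid b (\<lambda>k. z0 k s)"
      using max2_eq_w2[OF two_bidders, of f] f unfolding b_def x_def by simp
    show "bid b (\<lambda>k. z0 k s) - ps b j * \<delta> \<le> bid a (\<lambda>k. z0 k s) - ps a j * \<delta>"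
      using \<delta>_gap f unfolding x_def by (simp add: algebra_simps)
    have "ps b j \<le> pure_value j"
      using min_le_max2[OF two_bidders a b, of "\<lambda>i. ps i j"] pj by (simp add: pure_value_def)
    then show "\<delta> * ps b j \<le> \<delta> * pure_value j" using \<delta>(1) by simp
  qed
  moreover have "pure_mass z = pure_mass z0 + \<delta>"
    unfolding z_def using s pair_index[OF a b(1)] j by (intro pure_mass_divert)
  ultimately show ?thesis using \<delta>(1) by force
qed

lemma lex_maximizer_balanced:
  fixes z0 :: "nat \<Rightarrow> nat \<Rightarrow> real" and s :: nat
  defines "f \<equiv> sigval m ps z0 s"
  assumes z0: "z0 \<in> canonical"
    and rev_max: "\<forall>w\<in>canonical. bound_revenue w \<le> bound_revenue z0"
    and pure_max: "\<forall>w\<in>canonical. bound_revenue w = bound_revenue z0 \<longrightarrow> pure_mass w \<le> pure_mass z0"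
    and card: "card (supp m z0 s) \<ge> 2"
  shows "f (w1 n f) = f (w2 n f)"
proof (rule ccontr)
  assume "f (w1 n f) \<noteq> f (w2 n f)"
  moreover have "f (w2 n f) \<le> f (w1 n f)" using w1_is_max[of n f] w2_is_max_of_rest[OF two_bidders, of f] by auto
  ultimately have gap: "f (w2 n f) < f (w1 n f)" by simp
  have "s < n * n" using card card_supp_pure_signal[OF z0, of s] by linarith
  then obtain z where "z \<in> canonical" "bound_revenue z0 \<le> bound_revenue z" "pure_mass z0 < pure_mass z"
    using strict_winner_improvable[OF z0 _ gap[unfolded f_def]] by blast
  then show False using rev_max pure_max by force
qed

theorem exists_optimal_balanced_scheme:
  "\<exists>Sig phi. is_scheme m Sig phi
     \<and> (\<forall>Sig' phi'. is_scheme m Sig' phi' \<longrightarrow> revenue n m ps Sig' phi' \<le> revenue n m ps Sig phi)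
     \<and> (\<forall>s\<in>Sig. card (supp m phi s) \<ge> 2 \<longrightarrow>
          sigval m ps phi s (w1 n (sigval m ps phi s)) = sigval m ps phi s (w2 n (sigval m ps phi s)))"
proof -
  obtain z0 where z0: "z0 \<in> canonical" "\<forall>w\<in>canonical. bound_revenue w \<le> bound_revenue z0"
    "\<forall>w\<in>canonical. bound_revenue w = bound_revenue z0 \<longrightarrow> pure_mass w \<le> pure_mass z0"
    by (rule lex_maximizer)
  have "revenue n m ps Sig' phi' \<le> revenue n m ps {..<nsig} z0"
    if sch: "is_scheme m Sig' phi'" for Sig' phi'
  proof -
    obtain w where "w \<in> canonical" "revenue n m ps Sig' phi' \<le> bound_revenue w"
      using revenue_le_bound_revenue[OF sch] by blast
    then show ?thesis using z0 bound_revenue_le_revenue[OF z0(1)] by force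
  qed
  then show ?thesis
    using is_scheme_canonical[OF z0(1)] lex_maximizer_balanced[OF z0]
    by (intro exI[of _ "{..<nsig}"] exI[of _ z0]) auto
qed

end

theorem mainTheorem8:
  fixes n m :: nat and p :: "nat \<Rightarrow> real" and v :: "nat \<Rightarrow> nat \<Rightarrow> real"
  assumes "n \<ge> 2"
    and "\<forall>j<m. p j \<ge> 0"
    and "(\<Sum>j<m. p j) = 1"
    and "\<forall>i<n. \<forall>j<m. v i j \<ge> 0"
  shows "\<exists>Sig phi. is_scheme m Sig phi
     \<and> (\<forall>Sig' phi'. is_scheme m Sig' phi' \<longrightarrow>
            revenue n m (psi p v) Sig' phi' \<le> revenue n m (psi p v) Sig phi)
     \<and> (\<forall>s\<in>Sig. card (supp m phi s) \<ge> 2 \<longrightarrow>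
            sigval m (psi p v) phi s (w1 n (sigval m (psi p v) phi s))
          = sigval m (psi p v) phi s (w2 n (sigval m (psi p v) phi s)))"
proof -
  interpret auction n m "psi p v"
    using assms by unfold_locales (auto simp: psi_def)
  show ?thesis by (rule exists_optimal_balanced_scheme)
qed

end
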